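(* Under the setting in the context, for every integer $v\ge1$, the number $V$ of false discoveries of the knockoffs procedure with parameter $v$ satisfies $\mathbb E[V]\le v$ (i.e. the procedure controls the per-family error rate at level $v$).
   Context: Setting: $p\ge1$; $W_1,\dots,W_p$ are real random variables, almost surely pairwise distinct; $\chi_1,\dots,\chi_p$ take values in $\{-1,0,1\}$; $\mathcal H_0\subseteq\{1,\dots,p\}$ is the set of true nulls, and conditional on $(W_1,\dots,W_p)$ and $(\chi_j)_{j\notin\mathcal H_0}$, the variables $(\chi_j)_{j\in\mathcal H_0}$ are jointly independent and uniform on $\{-1,+1\}$. Knockoffs procedure with parameter $v$: let $\rho$ be the permutation with $W_{\rho(1)}>\cdots>W_{\rho(p)}$; let $j^\star$ be the position of the $v$-th $-1$ in $\chi_{\rho(1)},\dots,\chi_{\rho(p)}$ ($j^\star=p$ if fewer than $v$ entries equal $-1$); reject $\rho(j)$ for all $j\le j^\star$ with $\chi_{\rho(j)}=+1$. $V=\#\{j\in\mathcal H_0: j\text{ rejected}\}$. *)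

theory Defs
  imports "HOL-Probability.Probability"
begin

text \<open>Variables are indexed by 1..p. The ordering rho lists the indices by
decreasing W (ties, which occur with probability zero, are broken arbitrarily
but deterministically by the stable sort).\<close>

definition knock_order :: "nat \<Rightarrow> (nat \<Rightarrow> real) \<Rightarrow> nat list" where
  "knock_order p w = rev (sort_key w [1..<Suc p])"

definition knock_negs :: "nat \<Rightarrow> (nat \<Rightarrow> real) \<Rightarrow> (nat \<Rightarrow> int) \<Rightarrow> nat \<Rightarrow> nat" where
  "knock_negs p w c t = card {k. k < t \<and> k < p \<and> c (knock_order p w ! k) = -1}"

text \<open>j-star: the (1-based) position of the v-th -1, or p if there are fewer than v.\<close>
definition knock_stop :: "nat \<Rightarrow> nat \<Rightarrow> (nat \<Rightarrow> real) \<Rightarrow> (nat \<Rightarrow> int) \<Rightarrow> nat" where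
  "knock_stop p v w c =
     (if v \<le> knock_negs p w c p then (LEAST t. knock_negs p w c t = v) else p)"

text \<open>Rejected indices: rho(j) for positions j \<le> j-star with sign +1
(0-based position k < j-star).\<close>
definition knock_rejections :: "nat \<Rightarrow> nat \<Rightarrow> (nat \<Rightarrow> real) \<Rightarrow> (nat \<Rightarrow> int) \<Rightarrow> nat set" where
  "knock_rejections p v w c =
     {knock_order p w ! k | k. k < knock_stop p v w c \<and> c (knock_order p w ! k) = 1}"

definition knock_V :: "nat \<Rightarrow> nat \<Rightarrow> nat set \<Rightarrow> (nat \<Rightarrow> real) \<Rightarrow> (nat \<Rightarrow> int) \<Rightarrow> nat" where
  "knock_V p v H0 w c = card (knock_rejections p v w c \<inter> H0)"

end

theory Submission
  imports Defs
begin

text \<open>A null j is rejected only if its sign is +1 and fewer than v signs -1 precede it in the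
ranking; counting just the negative nulls above j, V is at most the number of positive nulls
preceded by fewer than v negative nulls. Conditionally on the scores the null signs are uniform,
so E[V] is bounded by the average of this count over all 2^m sign patterns of the m nulls. Summed
over all patterns the count is at most v 2^m: the top-ranked null is either positive, contributing
one in every pattern, or negative, leaving the same count for the remaining nulls with v - 1 in
place of v.\<close>

lemma nat_discrete_ivt:
  fixes f :: "nat \<Rightarrow> nat"
  assumes "f 0 \<le> v" and "\<And>t. f (Suc t) \<le> f t + 1" and "v \<le> f n"
  shows "\<exists>t\<le>n. f t = v"
  using assms(3)
proof (induction n)
  case 0
  then show ?case using assms(1) by auto
next
  case (Suc n)
  show ?case
  proof (cases "v \<le> f n")
    case True
    then show ?thesis using Suc.IH le_Suc_eq by blast
  next
    case False
    then have "f (Suc n) = v" using Suc.prems assms(2)[of n] by linarith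
    then show ?thesis by blast
  qed
qed

lemma knock_negs_0 [simp]: "knock_negs p w c 0 = 0"
  by (simp add: knock_negs_def)

lemma knock_negs_mono: "t \<le> t' \<Longrightarrow> knock_negs p w c t \<le> knock_negs p w c t'"
  unfolding knock_negs_def by (intro card_mono) auto

lemma knock_negs_Suc_le: "knock_negs p w c (Suc t) \<le> knock_negs p w c t + 1"
proof -
  let ?S = "{k. k < t \<and> k < p \<and> c (knock_order p w ! k) = -1}"
  have "knock_negs p w c (Suc t) \<le> card (insert t ?S)"
    unfolding knock_negs_def by (intro card_mono) auto
  also have "\<dots> \<le> knock_negs p w c t + 1"
    unfolding knock_negs_def by (simp add: card_insert_if)
  finally show ?thesis .
qed

lemma knock_negs_reaches:
  "v \<le> knock_negs p w c n \<Longrightarrow> \<exists>t\<le>n. knock_negs p w c t = v"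
  using nat_discrete_ivt[of "knock_negs p w c" v, OF _ knock_negs_Suc_le] by simp

lemma knock_stop_le: "knock_stop p v w c \<le> p"
proof (cases "v \<le> knock_negs p w c p")
  case True
  then obtain t where "t \<le> p" "knock_negs p w c t = v"
    using knock_negs_reaches by blast
  then show ?thesis
    using True Least_le[of "\<lambda>t. knock_negs p w c t = v" t] by (simp add: knock_stop_def)
qed (simp add: knock_stop_def)

lemma knock_negs_less_before_stop:
  assumes "k < knock_stop p v w c"
  shows "knock_negs p w c k < v"
proof (rule ccontr)
  assume "\<not> knock_negs p w c k < v"
  then obtain t where t: "t \<le> k" "knock_negs p w c t = v"
    using knock_negs_reaches by (meson not_less)
  then have "v \<le> knock_negs p w c p"
    using knock_negs_mono[of t p p w c] assms knock_stop_le[of p v w c] by linarith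
  then have "knock_stop p v w c \<le> t"
    using t(2) by (simp add: knock_stop_def Least_le)
  then show False using assms t(1) by linarith
qed

lemma length_knock_order [simp]: "length (knock_order p w) = p"
  by (simp add: knock_order_def)

lemma set_knock_order [simp]: "set (knock_order p w) = {1..p}"
  by (auto simp: knock_order_def)

lemma knock_order_antimono:
  assumes "k \<le> k'" "k' < p"
  shows "w (knock_order p w ! k') \<le> w (knock_order p w ! k)"
proof -
  let ?s = "sort_key w [1..<Suc p]"
  have sorted: "sorted (map w ?s)" by (rule sorted_sort_key)
  have "knock_order p w ! k' = ?s ! (p - 1 - k')" "knock_order p w ! k = ?s ! (p - 1 - k)"
    using assms by (auto simp: knock_order_def rev_nth)
  moreover have "w (?s ! (p - 1 - k')) \<le> w (?s ! (p - 1 - k))"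
    using sorted_nth_mono[OF sorted, of "p - 1 - k'" "p - 1 - k"] assms by auto
  ultimately show ?thesis by simp
qed

lemma knock_rejected_few_negatives_above:
  assumes "j \<in> knock_rejections p v w c" "A \<subseteq> {1..p}"
  shows "c j = 1 \<and> card {i\<in>A. w j < w i \<and> c i = -1} < v"
proof -
  let ?L = "knock_order p w"
  obtain k where k: "j = ?L ! k" "k < knock_stop p v w c" "c j = 1"
    using assms(1) unfolding knock_rejections_def by auto
  let ?K = "{k'. k' < k \<and> k' < p \<and> c (?L ! k') = -1}"
  have "{i\<in>A. w j < w i \<and> c i = -1} \<subseteq> (!) ?L ` ?K"
  proof
    fix i assume i: "i \<in> {i\<in>A. w j < w i \<and> c i = -1}"
    then have "i \<in> set ?L" using assms(2) by auto
    then obtain y where y: "y < p" "?L ! y = i"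
      by (metis in_set_conv_nth length_knock_order)
    have "y < k"
      using knock_order_antimono[of k y p w] i k(1) y by (cases "y < k") auto
    then show "i \<in> (!) ?L ` ?K" using i y by force
  qed
  then have "card {i\<in>A. w j < w i \<and> c i = -1} \<le> card ((!) ?L ` ?K)"
    by (intro card_mono) auto
  also have "\<dots> \<le> card ?K"
    by (rule card_image_le) auto
  also have "\<dots> < v"
    using knock_negs_less_before_stop[OF k(2)] by (simp add: knock_negs_def)
  finally show ?thesis using k(3) by simp
qed

definition sign_pattern :: "nat set \<Rightarrow> nat \<Rightarrow> int" where
  "sign_pattern N j = (if j \<in> N then -1 else 1)"

definition positives_before_vth_neg :: "(nat \<Rightarrow> real) \<Rightarrow> nat set \<Rightarrow> nat \<Rightarrow> nat set \<Rightarrow> nat" where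
  "positives_before_vth_neg w A v N = card {j \<in> A - N. card {i \<in> N. w j < w i} < v}"

lemma positives_before_vth_neg_le_card:
  "finite A \<Longrightarrow> positives_before_vth_neg w A v N \<le> card A"
  unfolding positives_before_vth_neg_def by (intro card_mono) auto

lemma positives_before_vth_neg_cong:
  assumes "N \<subseteq> A" "\<And>i. i \<in> A \<Longrightarrow> w i = w' i"
  shows "positives_before_vth_neg w A v N = positives_before_vth_neg w' A v N"
proof -
  have "{i \<in> N. w j < w i} = {i \<in> N. w' j < w' i}" if "j \<in> A" for j
    using assms that by auto
  then show ?thesis
    unfolding positives_before_vth_neg_def by (intro arg_cong[where f = card]) auto
qed

lemma knock_V_le_positives_before_vth_neg:
  assumes "H0 \<subseteq> {1..p}" "N \<subseteq> H0" "\<forall>j\<in>H0. c j = sign_pattern N j"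
  shows "knock_V p v H0 w c \<le> positives_before_vth_neg w H0 v N"
proof -
  have "knock_rejections p v w c \<inter> H0 \<subseteq> {j \<in> H0 - N. card {i \<in> N. w j < w i} < v}"
  proof
    fix j assume j: "j \<in> knock_rejections p v w c \<inter> H0"
    have "{i\<in>H0. w j < w i \<and> c i = -1} = {i \<in> N. w j < w i}"
      using assms(2,3) by (auto simp: sign_pattern_def split: if_splits)
    then show "j \<in> {j \<in> H0 - N. card {i \<in> N. w j < w i} < v}"
      using j assms(1,3) knock_rejected_few_negatives_above[of j p v w c H0]
      by (auto simp: sign_pattern_def)
  qed
  moreover have "finite H0" using assms(1) finite_subset by blast
  ultimately show ?thesis
    unfolding knock_V_def positives_before_vth_neg_def by (intro card_mono) auto
qed

lemma positives_before_vth_neg_insert_top_pos: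
  assumes "t \<notin> A" "N \<subseteq> A" "\<And>i. i \<in> A \<Longrightarrow> w i < w t" "0 < v" "finite A"
  shows "positives_before_vth_neg w (insert t A) v N = Suc (positives_before_vth_neg w A v N)"
proof -
  have "{i \<in> N. w t < w i} = {}" using assms(2,3) by fastforce
  then have "card {i \<in> N. w t < w i} < v" using assms(4) by (simp del: Collect_empty_eq)
  then have "{j \<in> insert t A - N. card {i \<in> N. w j < w i} < v}
      = insert t {j \<in> A - N. card {i \<in> N. w j < w i} < v}"
    using assms(1,2,4) by auto
  then show ?thesis
    unfolding positives_before_vth_neg_def using assms(1,5) by simp
qed

lemma positives_before_vth_neg_insert_top_neg:
  assumes "t \<notin> A" "N \<subseteq> A" "\<And>i. i \<in> A \<Longrightarrow> w i < w t" "finite A"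
  shows "positives_before_vth_neg w (insert t A) (Suc u) (insert t N) = positives_before_vth_neg w A u N"
proof -
  have "card {i \<in> insert t N. w j < w i} = Suc (card {i \<in> N. w j < w i})" if "j \<in> A - N" for j
  proof -
    have "{i \<in> insert t N. w j < w i} = insert t {i \<in> N. w j < w i}"
      using assms(3) that by auto
    moreover have "finite N" using assms(2,4) finite_subset by blast
    moreover have "t \<notin> N" using assms(1,2) by blast
    ultimately show ?thesis by simp
  qed
  then have "{j \<in> insert t A - insert t N. card {i \<in> insert t N. w j < w i} < Suc u}
      = {j \<in> A - N. card {i \<in> N. w j < w i} < u}"
    using assms(1) by auto
  then show ?thesis unfolding positives_before_vth_neg_def by simp
qed

lemma sum_positives_before_vth_neg_le:
  assumes "finite A" "inj_on w A"
  shows "(\<Sum>N\<in>Pow A. positives_before_vth_neg w A v N) \<le> v * 2 ^ card A"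
  using assms
proof (induction A arbitrary: v rule: finite_ranking_induct[where f = w])
  case empty
  then show ?case by (simp add: positives_before_vth_neg_def)
next
  case (insert t A)
  show ?case
  proof (cases "t \<in> A")
    case True
    then show ?thesis using insert by (simp add: insert_absorb)
  next
    case t: False
    have top: "w i < w t" if "i \<in> A" for i
      using insert.hyps(2)[OF that] insert.prems t that
      by (metis inj_on_eq_iff insertCI order_le_less)
    have IH: "(\<Sum>N\<in>Pow A. positives_before_vth_neg w A u N) \<le> u * 2 ^ card A" for u
      using insert.IH insert.prems inj_on_subset by blast
    have sum_Pow_insert: "(\<Sum>N\<in>Pow (insert t A). f N) = (\<Sum>N\<in>Pow A. f N) + (\<Sum>N\<in>Pow A. f (insert t N))"
      for f :: "nat set \<Rightarrow> nat"
    proof -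
      have "inj_on (insert t) (Pow A)"
        using t unfolding inj_on_def by (metis PowD insert_ident subset_iff)
      then show ?thesis
        unfolding Pow_insert using insert.hyps(1) t
        by (subst sum.union_disjoint) (auto simp: sum.reindex)
    qed
    show ?thesis
    proof (cases v)
      case 0
      then show ?thesis by (simp add: positives_before_vth_neg_def)
    next
      case (Suc u)
      have "(\<Sum>N\<in>Pow (insert t A). positives_before_vth_neg w (insert t A) v N)
          = (\<Sum>N\<in>Pow A. Suc (positives_before_vth_neg w A v N))
            + (\<Sum>N\<in>Pow A. positives_before_vth_neg w A u N)"
        unfolding sum_Pow_insert Suc using t top insert.hyps(1)
        by (simp add: positives_before_vth_neg_insert_top_pos positives_before_vth_neg_insert_top_neg)
      also have "\<dots> \<le> (v * 2 ^ card A + 2 ^ card A) + u * 2 ^ card A"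
        using IH[of v] IH[of u] insert.hyps(1) by (simp add: sum_Suc card_Pow)
      also have "\<dots> = v * 2 ^ card (insert t A)"
        using t insert.hyps(1) Suc by simp
      finally show ?thesis .
    qed
  qed
qed

lemma borel_measurable_card_Collect:
  assumes "finite S" "\<And>j. j \<in> S \<Longrightarrow> Measurable.pred M (P j)"
  shows "(\<lambda>x. real (card {j \<in> S. P j x})) \<in> borel_measurable M"
proof -
  have "real (card {j \<in> S. P j x}) = (\<Sum>j\<in>S. of_bool (P j x))" for x
    using assms(1) by (simp add: Collect_conj_eq Int_commute)
  moreover have "(\<lambda>x. \<Sum>j\<in>S. of_bool (P j x) :: real) \<in> borel_measurable M"
    using assms(2) by (intro borel_measurable_sum) measurable
  ultimately show ?thesis by simp
qed

lemma borel_measurable_positives_before_vth_neg: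
  assumes "finite A" "N \<subseteq> A" "A \<subseteq> I"
  shows "(\<lambda>w. real (positives_before_vth_neg w A v N)) \<in> borel_measurable (PiM I (\<lambda>_. borel))"
proof -
  have coord: "(\<lambda>w. w i) \<in> borel_measurable (PiM I (\<lambda>_. borel :: real measure))" if "i \<in> A" for i
    using that assms(3) by (intro measurable_component_singleton) auto
  have less: "Measurable.pred (PiM I (\<lambda>_. borel)) (\<lambda>w :: nat \<Rightarrow> real. w j < w i)"
    if "i \<in> A" "j \<in> A" for i j
    using coord[OF that(2)] coord[OF that(1)] by (rule borel_measurable_pred_less)
  have count: "(\<lambda>w :: nat \<Rightarrow> real. real (card {i \<in> N. w j < w i})) \<in> borel_measurable (PiM I (\<lambda>_. borel))"
    if "j \<in> A" for j
    using assms(1,2) that less by (intro borel_measurable_card_Collect) (auto intro: finite_subset)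
  have "Measurable.pred (PiM I (\<lambda>_. borel)) (\<lambda>w :: nat \<Rightarrow> real. card {i \<in> N. w j < w i} < v)"
    if "j \<in> A" for j
    using borel_measurable_pred_less[OF count[OF that] borel_measurable_const[of "real v"]] by simp
  then show ?thesis
    unfolding positives_before_vth_neg_def using assms(1) by (intro borel_measurable_card_Collect) auto
qed

lemma (in finite_measure) integral_indicator_nat_valued:
  fixes h :: "'a \<Rightarrow> real"
  assumes "h \<in> borel_measurable M" "\<And>x. x \<in> space M \<Longrightarrow> h x \<in> real ` {..K}" "E \<in> sets M"
  shows "(\<integral>x. h x * indicator E x \<partial>M)
    = (\<Sum>n\<le>K. real n * measure M {x\<in>space M. h x = real n \<and> x \<in> E})"
proof -
  let ?L = "\<lambda>n. {x\<in>space M. h x = real n \<and> x \<in> E}"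
  have L: "?L n \<in> sets M" for n
    using assms(1,3) by measurable
  have "(\<integral>x. h x * indicator E x \<partial>M) = (\<integral>x. (\<Sum>n\<le>K. real n * indicator (?L n) x) \<partial>M)"
  proof (intro Bochner_Integration.integral_cong refl)
    fix x assume x: "x \<in> space M"
    then obtain k where k: "k \<le> K" "h x = real k" using assms(2) by force
    have "(\<Sum>n\<le>K. real n * indicator (?L n) x) = (\<Sum>n\<le>K. if n = k then real k * indicator E x else 0)"
      using x k by (intro sum.cong refl) (auto simp: indicator_def)
    then show "h x * indicator E x = (\<Sum>n\<le>K. real n * indicator (?L n) x)"
      using k by simp
  qed
  also have "\<dots> = (\<Sum>n\<le>K. (\<integral>x. real n * indicator (?L n) x \<partial>M))"
    using L by (intro Bochner_Integration.integral_sum integrable_mult_right integrable_real_indicator)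
      (simp_all add: less_top[symmetric])
  also have "\<dots> = (\<Sum>n\<le>K. real n * measure M (?L n))"
    using L by simp
  finally show ?thesis .
qed

lemma (in finite_measure) integral_indicator_eq_scaled:
  fixes h :: "'a \<Rightarrow> real"
  assumes "h \<in> borel_measurable M" "\<And>x. x \<in> space M \<Longrightarrow> h x \<in> real ` {..K}" "E \<in> sets M"
    and "\<And>n. measure M {x\<in>space M. h x = real n \<and> x \<in> E}
      = measure M {x\<in>space M. h x = real n} * c"
  shows "(\<integral>x. h x * indicator E x \<partial>M) = (\<integral>x. h x \<partial>M) * c"
proof -
  have "(\<integral>x. h x * indicator E x \<partial>M)
      = (\<Sum>n\<le>K. real n * measure M {x\<in>space M. h x = real n \<and> x \<in> E})"
    using assms(1-3) by (rule integral_indicator_nat_valued)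
  also have "\<dots> = (\<Sum>n\<le>K. real n * measure M {x\<in>space M. h x = real n \<and> x \<in> space M}) * c"
  proof -
    have "{x\<in>space M. h x = real n \<and> x \<in> space M} = {x\<in>space M. h x = real n}" for n
      by auto
    then show ?thesis unfolding assms(4) by (simp add: sum_distrib_right mult.assoc)
  qed
  also have "(\<Sum>n\<le>K. real n * measure M {x\<in>space M. h x = real n \<and> x \<in> space M})
      = (\<integral>x. h x * indicator (space M) x \<partial>M)"
    using assms(1,2) sets.top by (rule integral_indicator_nat_valued[symmetric])
  also have "(\<integral>x. h x * indicator (space M) x \<partial>M) = (\<integral>x. h x \<partial>M)"
    by (intro Bochner_Integration.integral_cong) auto
  finally show ?thesis .
qed

locale knockoff_model = prob_space M for M :: "'a measure" +
  fixes p :: nat and H0 :: "nat set" and W :: "nat \<Rightarrow> 'a \<Rightarrow> real" and chi :: "nat \<Rightarrow> 'a \<Rightarrow> int"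
  assumes nulls_subset: "H0 \<subseteq> {1..p}"
    and W_measurable: "\<And>j. j \<in> {1..p} \<Longrightarrow> W j \<in> borel_measurable M"
    and chi_measurable: "\<And>j. j \<in> {1..p} \<Longrightarrow> chi j \<in> measurable M (count_space UNIV)"
    and W_distinct: "AE x in M. \<forall>i\<in>{1..p}. \<forall>j\<in>{1..p}. i \<noteq> j \<longrightarrow> W i x \<noteq> W j x"
    and null_signs_uniform: "\<And>s B. (\<forall>j\<in>H0. s j \<in> {-1, 1}) \<Longrightarrow>
          B \<in> sets (PiM {1..p} (\<lambda>_. borel) \<Otimes>\<^sub>M PiM ({1..p} - H0) (\<lambda>_. count_space UNIV)) \<Longrightarrow>
          measure M {x \<in> space M.
              (restrict (\<lambda>j. W j x) {1..p}, restrict (\<lambda>j. chi j x) ({1..p} - H0)) \<in> B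
              \<and> (\<forall>j\<in>H0. chi j x = s j)}
          = measure M {x \<in> space M.
              (restrict (\<lambda>j. W j x) {1..p}, restrict (\<lambda>j. chi j x) ({1..p} - H0)) \<in> B}
            / 2 ^ card H0"
begin

definition scores :: "'a \<Rightarrow> nat \<Rightarrow> real" where
  "scores x = restrict (\<lambda>j. W j x) {1..p}"

definition sign_event :: "nat set \<Rightarrow> 'a set" where
  "sign_event N = {x \<in> space M. \<forall>j\<in>H0. chi j x = sign_pattern N j}"

lemma finite_nulls: "finite H0"
  using nulls_subset finite_subset by blast

lemma scores_null: "j \<in> H0 \<Longrightarrow> scores x j = W j x"
  using nulls_subset by (auto simp: scores_def)

lemma measurable_scores: "scores \<in> measurable M (PiM {1..p} (\<lambda>_. borel))"
  unfolding scores_def by (intro measurable_restrict W_measurable)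

lemma sets_sign_event: "sign_event N \<in> sets M"
proof -
  have "{x \<in> space M. chi j x = sign_pattern N j} \<in> sets M" if "j \<in> H0" for j
    using measurable_sets[OF chi_measurable, of j "{sign_pattern N j}"] that nulls_subset
    by (auto simp: vimage_def Int_def conj_commute)
  then show ?thesis
    unfolding sign_event_def by (intro sets.sets_Collect_finite_All finite_nulls)
qed

lemma prob_scores_inter_sign_event:
  assumes "B \<in> sets (PiM {1..p} (\<lambda>_. borel))"
  shows "prob ({x \<in> space M. scores x \<in> B} \<inter> sign_event N)
    = prob {x \<in> space M. scores x \<in> B} / 2 ^ card H0"
proof -
  let ?C = "PiM ({1..p} - H0) (\<lambda>_. count_space (UNIV :: int set))"
  have "B \<times> space ?C \<in> sets (PiM {1..p} (\<lambda>_. borel) \<Otimes>\<^sub>M ?C)"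
    using assms by (intro pair_measureI) auto
  moreover have "\<forall>j\<in>H0. sign_pattern N j \<in> {-1, 1}"
    by (simp add: sign_pattern_def)
  moreover have signs_space: "restrict (\<lambda>j. chi j x) ({1..p} - H0) \<in> space ?C" for x
    by (simp add: space_PiM)
  moreover have "{x \<in> space M. (scores x, restrict (\<lambda>j. chi j x) ({1..p} - H0)) \<in> B \<times> space ?C
      \<and> (\<forall>j\<in>H0. chi j x = sign_pattern N j)} = {x \<in> space M. scores x \<in> B} \<inter> sign_event N"
    using signs_space by (auto simp: sign_event_def)
  moreover have "{x \<in> space M. (scores x, restrict (\<lambda>j. chi j x) ({1..p} - H0)) \<in> B \<times> space ?C}
      = {x \<in> space M. scores x \<in> B}"
    using signs_space by auto
  ultimately show ?thesis
    using null_signs_uniform[of "sign_pattern N" "B \<times> space ?C"] unfolding scores_def by simp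
qed

lemma sign_event_subset_space: "sign_event N \<subseteq> space M"
  by (auto simp: sign_event_def)

lemma prob_sign_event: "prob (sign_event N) = 1 / 2 ^ card H0"
proof -
  have "{x \<in> space M. scores x \<in> space (PiM {1..p} (\<lambda>_. borel))} = space M"
    using measurable_space[OF measurable_scores] by auto
  then show ?thesis
    using prob_scores_inter_sign_event[of "space (PiM {1..p} (\<lambda>_. borel))" N]
    by (simp add: Int_absorb1 sign_event_subset_space prob_space)
qed

lemma AE_sign_event: "AE x in M. \<exists>N\<subseteq>H0. x \<in> sign_event N"
proof -
  have disjoint: "disjoint_family_on sign_event (Pow H0)"
    unfolding disjoint_family_on_def
  proof (intro ballI impI)
    fix N N' assume "N \<in> Pow H0" "N' \<in> Pow H0" "N \<noteq> N'"
    then obtain j where "j \<in> H0" "(j \<in> N) \<noteq> (j \<in> N')"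
      by blast
    then have "j \<in> H0" "sign_pattern N j \<noteq> sign_pattern N' j"
      by (auto simp: sign_pattern_def)
    then show "sign_event N \<inter> sign_event N' = {}"
      by (auto simp: sign_event_def)
  qed
  have "prob (\<Union>N\<in>Pow H0. sign_event N) = (\<Sum>N\<in>Pow H0. prob (sign_event N))"
    using finite_nulls disjoint sets_sign_event by (intro finite_measure_finite_Union) auto
  also have "\<dots> = 1"
    using finite_nulls by (simp add: prob_sign_event card_Pow)
  finally show ?thesis
    by (rule AE_prob_1[THEN AE_mp]) auto
qed

lemma integral_scores_indicator_sign_event:
  assumes f: "f \<in> borel_measurable (PiM {1..p} (\<lambda>_. borel))"
    and range: "\<And>w. f w \<in> real ` {..K}"
  shows "(\<integral>x. f (scores x) * indicator (sign_event N) x \<partial>M)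
    = (\<integral>x. f (scores x) \<partial>M) * (1 / 2 ^ card H0)"
proof (rule integral_indicator_eq_scaled)
  show "(\<lambda>x. f (scores x)) \<in> borel_measurable M"
    using measurable_scores f by measurable
  fix n :: nat
  let ?B = "f -` {real n} \<inter> space (PiM {1..p} (\<lambda>_. borel))"
  have "?B \<in> sets (PiM {1..p} (\<lambda>_. borel))"
    using f by measurable
  moreover have level: "{x \<in> space M. scores x \<in> ?B} = {x \<in> space M. f (scores x) = real n}"
    using measurable_space[OF measurable_scores] by auto
  moreover have "{x \<in> space M. f (scores x) = real n \<and> x \<in> sign_event N}
      = {x \<in> space M. scores x \<in> ?B} \<inter> sign_event N"
    unfolding level by auto
  ultimately show "prob {x \<in> space M. f (scores x) = real n \<and> x \<in> sign_event N}
      = prob {x \<in> space M. f (scores x) = real n} * (1 / 2 ^ card H0)"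
    using prob_scores_inter_sign_event[of ?B N] by simp
qed (use range sets_sign_event in auto)

lemma borel_measurable_positives_scores:
  "N \<subseteq> H0 \<Longrightarrow> (\<lambda>x. real (positives_before_vth_neg (scores x) H0 v N)) \<in> borel_measurable M"
  using measurable_compose[OF measurable_scores
      borel_measurable_positives_before_vth_neg[OF finite_nulls _ nulls_subset]] .

lemma integrable_positives_scores:
  assumes "N \<subseteq> H0"
  shows "integrable M (\<lambda>x. real (positives_before_vth_neg (scores x) H0 v N))"
proof (rule integrable_const_bound[where B = "card H0"])
  show "AE x in M. norm (real (positives_before_vth_neg (scores x) H0 v N)) \<le> real (card H0)"
    using positives_before_vth_neg_le_card[OF finite_nulls] by simp
qed (rule borel_measurable_positives_scores[OF assms])

lemma integral_positives_scores_sign_event: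
  assumes "N \<subseteq> H0"
  shows "(\<integral>x. real (positives_before_vth_neg (scores x) H0 v N) * indicator (sign_event N) x \<partial>M)
    = (\<integral>x. real (positives_before_vth_neg (scores x) H0 v N) \<partial>M) * (1 / 2 ^ card H0)"
  using borel_measurable_positives_before_vth_neg[OF finite_nulls assms nulls_subset]
    positives_before_vth_neg_le_card[OF finite_nulls]
  by (intro integral_scores_indicator_sign_event[where K = "card H0"]) auto

lemma AE_knock_V_le_sum_sign_events:
  "AE x in M. real (knock_V p v H0 (\<lambda>j. W j x) (\<lambda>j. chi j x))
    \<le> (\<Sum>N\<in>Pow H0. real (positives_before_vth_neg (scores x) H0 v N) * indicator (sign_event N) x)"
  using AE_sign_event
proof eventually_elim
  case (elim x)
  then obtain N0 where N0: "N0 \<subseteq> H0" "x \<in> sign_event N0" by blast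
  then have "knock_V p v H0 (\<lambda>j. W j x) (\<lambda>j. chi j x) \<le> positives_before_vth_neg (\<lambda>j. W j x) H0 v N0"
    using nulls_subset
    by (intro knock_V_le_positives_before_vth_neg) (auto simp: sign_event_def sign_pattern_def)
  also have "\<dots> = positives_before_vth_neg (scores x) H0 v N0"
    using N0(1) by (intro positives_before_vth_neg_cong) (auto simp: scores_null)
  finally have "real (knock_V p v H0 (\<lambda>j. W j x) (\<lambda>j. chi j x))
      \<le> real (positives_before_vth_neg (scores x) H0 v N0) * indicator (sign_event N0) x"
    using N0(2) by simp
  also have "\<dots> \<le> (\<Sum>N\<in>Pow H0. real (positives_before_vth_neg (scores x) H0 v N) * indicator (sign_event N) x)"
    using N0(1) finite_nulls by (intro member_le_sum) auto
  finally show ?case .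
qed

lemma AE_sum_positives_scores_le:
  "AE x in M. (\<Sum>N\<in>Pow H0. real (positives_before_vth_neg (scores x) H0 v N)) \<le> real v * 2 ^ card H0"
  using W_distinct
proof eventually_elim
  case (elim x)
  then have "inj_on (scores x) H0"
    using nulls_subset by (auto simp: inj_on_def scores_null)
  then have "(\<Sum>N\<in>Pow H0. positives_before_vth_neg (scores x) H0 v N) \<le> v * 2 ^ card H0"
    by (rule sum_positives_before_vth_neg_le[OF finite_nulls])
  then show ?case
    by (metis (mono_tags) of_nat_le_iff of_nat_mult of_nat_numeral of_nat_power of_nat_sum)
qed

lemma expected_knock_V_le: "(\<integral>x. real (knock_V p v H0 (\<lambda>j. W j x) (\<lambda>j. chi j x)) \<partial>M) \<le> real v"
proof -
  let ?g = "\<lambda>N x. real (positives_before_vth_neg (scores x) H0 v N)"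
  have "(\<integral>x. real (knock_V p v H0 (\<lambda>j. W j x) (\<lambda>j. chi j x)) \<partial>M)
      \<le> (\<integral>x. (\<Sum>N\<in>Pow H0. ?g N x * indicator (sign_event N) x) \<partial>M)"
    using AE_knock_V_le_sum_sign_events integrable_positives_scores sets_sign_event
    by (intro integral_mono_AE') (auto intro!: integrable_real_mult_indicator sum_nonneg)
  also have "\<dots> = (\<Sum>N\<in>Pow H0. (\<integral>x. ?g N x \<partial>M) * (1 / 2 ^ card H0))"
    using integrable_positives_scores sets_sign_event
    by (subst Bochner_Integration.integral_sum)
      (auto intro!: integrable_real_mult_indicator simp: integral_positives_scores_sign_event)
  also have "\<dots> = (\<integral>x. (\<Sum>N\<in>Pow H0. ?g N x) \<partial>M) / 2 ^ card H0"
    using integrable_positives_scores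
    by (subst Bochner_Integration.integral_sum) (auto simp: sum_divide_distrib)
  also have "\<dots> \<le> (\<integral>x. real v * 2 ^ card H0 \<partial>M) / 2 ^ card H0"
    using AE_sum_positives_scores_le integrable_positives_scores
    by (intro divide_right_mono integral_mono_AE) auto
  also have "\<dots> = real v"
    by (simp add: prob_space)
  finally show ?thesis .
qed

end

theorem mainTheorem4:
  fixes M :: "'a measure" and p v :: nat and H0 :: "nat set"
    and W :: "nat \<Rightarrow> 'a \<Rightarrow> real" and chi :: "nat \<Rightarrow> 'a \<Rightarrow> int"
  assumes "prob_space M"
    and "p \<ge> 1" and "v \<ge> 1"
    and "H0 \<subseteq> {1..p}"
    and "\<And>j. j \<in> {1..p} \<Longrightarrow> W j \<in> borel_measurable M"
    and "\<And>j. j \<in> {1..p} \<Longrightarrow> chi j \<in> measurable M (count_space UNIV)"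
    and "\<And>j x. j \<in> {1..p} \<Longrightarrow> x \<in> space M \<Longrightarrow> chi j x \<in> {-1, 0, 1}"
    and "AE x in M. \<forall>i\<in>{1..p}. \<forall>j\<in>{1..p}. i \<noteq> j \<longrightarrow> W i x \<noteq> W j x"
    and "\<And>s B. (\<forall>j\<in>H0. s j \<in> {-1, 1}) \<Longrightarrow>
          B \<in> sets (PiM {1..p} (\<lambda>_. borel) \<Otimes>\<^sub>M PiM ({1..p} - H0) (\<lambda>_. count_space UNIV)) \<Longrightarrow>
          measure M {x \<in> space M.
              (restrict (\<lambda>j. W j x) {1..p}, restrict (\<lambda>j. chi j x) ({1..p} - H0)) \<in> B
              \<and> (\<forall>j\<in>H0. chi j x = s j)}
          = measure M {x \<in> space M.
              (restrict (\<lambda>j. W j x) {1..p}, restrict (\<lambda>j. chi j x) ({1..p} - H0)) \<in> B}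
            / 2 ^ card H0"
  shows "(\<integral>x. real (knock_V p v H0 (\<lambda>j. W j x) (\<lambda>j. chi j x)) \<partial>M) \<le> real v"
proof -
  interpret knockoff_model M p H0 W chi
    by (intro knockoff_model.intro knockoff_model_axioms.intro assms(1,4-6,8,9))
  show ?thesis
    by (rule expected_knock_V_le)
qed

end
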